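(* Let $G$ be a Lie group, $H\subseteq G$ a closed subgroup, and $\mathfrak{g}=\mathfrak{h}\oplus\mathfrak{m}$ a reductive decomposition. Equip $G/H$ with a $G$-invariant Riemannian metric (an $\mathrm{Ad}(H)$-invariant inner product $\langle\cdot,\cdot\rangle$ on $\mathfrak{m}$) with Levi-Civita connection $\nabla$. If $G/H$ admits a $G$-invariant Codazzi tensor field $A$ with $\nabla A\neq 0$, then the difference sectional curvature $K^d$ takes both positive and negative values, i.e. there are $2$-planes $\Pi,\Pi'\subseteq\mathfrak{m}$ with $K^d(\Pi)>0$ and $K^d(\Pi')<0$.
   Context: A reductive decomposition means $\mathfrak{m}$ is an $\mathrm{Ad}(H)$-invariant vector space complement of $\mathfrak{h}$ in $\mathfrak{g}$; $[X,Y]_{\mathfrak{m}}$ and $[X,Y]_{\mathfrak{h}}$ are the components of $[X,Y]$ in $\mathfrak{g}=\mathfrak{h}\oplus\mathfrak{m}$, and $\mathfrak{m}\cong T_{eH}(G/H)$. $G$-invariant tensor fields correspond to $\mathrm{Ad}(H)$-invariant tensors on $\mathfrak{m}$. A Codazzi tensor field is a symmetric twice-covariant tensor field $A$ with $(\nabla_XA)(Y,Z)=(\nabla_YA)(X,Z)$ for all vector fields. The Levi-Civita product $\alpha:\mathfrak{m}\times\mathfrak{m}\to\mathfrak{m}$ is defined by $2\langle\alpha(X,Y),Z\rangle=\langle[X,Y]_{\mathfrak{m}},Z\rangle-\langle X,[Y,Z]_{\mathfrak{m}}\rangle-\langle[X,Z]_{\mathfrak{m}},Y\rangle$. The Riemann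 curvature of the metric at $eH$ is $R(X,Y)Z=\alpha(X,\alpha(Y,Z))-\alpha(Y,\alpha(X,Z))-\alpha([X,Y]_{\mathfrak{m}},Z)-[[X,Y]_{\mathfrak{h}},Z]$, and the curvature of the canonical connection of the second kind $\nabla^0$ (the $G$-invariant connection corresponding to the zero product on $\mathfrak{m}$) is $R^0(X,Y)Z=-[[X,Y]_{\mathfrak{h}},Z]$, for $X,Y,Z\in\mathfrak{m}$. The difference curvature tensor is $R^d=R-R^0$, i.e. $R^d(X,Y)Z=\alpha(X,\alpha(Y,Z))-\alpha(Y,\alpha(X,Z))-\alpha([X,Y]_{\mathfrak{m}},Z)$. For a $2$-plane $\Pi\subseteq\mathfrak{m}$ with orthonormal basis $\{X,Y\}$, $K^d(\Pi)=\langle R^d(X,Y)Y,X\rangle=K(\Pi)-K^0(\Pi)$, where $K$ is the sectional curvature of the metric and $K^0(\Pi)=\langle R^0(X,Y)Y,X\rangle$ (independent of the orthonormal basis). *)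

theory Defs
  imports "HOL-Analysis.Analysis"
begin

text \<open>Infinitesimal data of a reductive homogeneous space G/H with G-invariant metric.\<close>

definition lie_bracket :: "('g::real_vector \<Rightarrow> 'g \<Rightarrow> 'g) \<Rightarrow> bool" where
  "lie_bracket br \<longleftrightarrow> bilinear br \<and> (\<forall>x y. br x y = - br y x) \<and>
     (\<forall>x y z. br x (br y z) + br y (br z x) + br z (br x y) = 0)"

definition reductive_decomp :: "('g::real_vector \<Rightarrow> 'g \<Rightarrow> 'g) \<Rightarrow> 'g set \<Rightarrow> 'g set \<Rightarrow> bool" where
  "reductive_decomp br h m \<longleftrightarrow> subspace h \<and> subspace m \<and> h \<inter> m = {0} \<and>
     (\<forall>v. \<exists>a\<in>h. \<exists>b\<in>m. v = a + b) \<and>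
     (\<forall>x\<in>h. \<forall>y\<in>h. br x y \<in> h) \<and> (\<forall>x\<in>h. \<forall>y\<in>m. br x y \<in> m)"

definition mpart :: "'g::real_vector set \<Rightarrow> 'g set \<Rightarrow> 'g \<Rightarrow> 'g" where
  "mpart h m v = (THE b. b \<in> m \<and> v - b \<in> h)"

definition hpart :: "'g::real_vector set \<Rightarrow> 'g set \<Rightarrow> 'g \<Rightarrow> 'g" where
  "hpart h m v = v - mpart h m v"

text \<open>Inner product on m (given as a bilinear form on g, only its restriction to m matters).\<close>
definition inner_on :: "'g::real_vector set \<Rightarrow> ('g \<Rightarrow> 'g \<Rightarrow> real) \<Rightarrow> bool" where
  "inner_on m ip \<longleftrightarrow> bilinear ip \<and> (\<forall>x\<in>m. \<forall>y\<in>m. ip x y = ip y x) \<and>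
     (\<forall>x\<in>m. x \<noteq> 0 \<longrightarrow> ip x x > 0)"

text \<open>ad(h)-invariance of a bilinear form on m (infinitesimal form of Ad(H)-invariance).\<close>
definition ad_h_invariant :: "('g::real_vector \<Rightarrow> 'g \<Rightarrow> 'g) \<Rightarrow> 'g set \<Rightarrow> 'g set \<Rightarrow> ('g \<Rightarrow> 'g \<Rightarrow> real) \<Rightarrow> bool" where
  "ad_h_invariant br h m B \<longleftrightarrow> (\<forall>z\<in>h. \<forall>x\<in>m. \<forall>y\<in>m. B (br z x) y + B x (br z y) = 0)"

definition lc_prod :: "('g::real_vector \<Rightarrow> 'g \<Rightarrow> 'g) \<Rightarrow> 'g set \<Rightarrow> 'g set \<Rightarrow> ('g \<Rightarrow> 'g \<Rightarrow> real) \<Rightarrow> 'g \<Rightarrow> 'g \<Rightarrow> 'g" where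
  "lc_prod br h m ip x y = (THE a. a \<in> m \<and> (\<forall>z\<in>m.
      2 * ip a z = ip (mpart h m (br x y)) z - ip x (mpart h m (br y z)) - ip (mpart h m (br x z)) y))"

text \<open>Difference curvature tensor R^d = R - R^0 at eH.\<close>
definition diff_curv :: "('g::real_vector \<Rightarrow> 'g \<Rightarrow> 'g) \<Rightarrow> 'g set \<Rightarrow> 'g set \<Rightarrow> ('g \<Rightarrow> 'g \<Rightarrow> real) \<Rightarrow> 'g \<Rightarrow> 'g \<Rightarrow> 'g \<Rightarrow> 'g" where
  "diff_curv br h m ip x y z = (let \<alpha> = lc_prod br h m ip in
      \<alpha> x (\<alpha> y z) - \<alpha> y (\<alpha> x z) - \<alpha> (mpart h m (br x y)) z)"

text \<open>Difference sectional curvature K^d of the plane spanned by an orthonormal pair {x,y}.\<close>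
definition diff_sec_curv :: "('g::real_vector \<Rightarrow> 'g \<Rightarrow> 'g) \<Rightarrow> 'g set \<Rightarrow> 'g set \<Rightarrow> ('g \<Rightarrow> 'g \<Rightarrow> real) \<Rightarrow> 'g \<Rightarrow> 'g \<Rightarrow> real" where
  "diff_sec_curv br h m ip x y = ip (diff_curv br h m ip x y y) x"

definition orthonormal_pair :: "'g::real_vector set \<Rightarrow> ('g \<Rightarrow> 'g \<Rightarrow> real) \<Rightarrow> 'g \<Rightarrow> 'g \<Rightarrow> bool" where
  "orthonormal_pair m ip x y \<longleftrightarrow> x \<in> m \<and> y \<in> m \<and> ip x x = 1 \<and> ip y y = 1 \<and> ip x y = 0"

text \<open>Covariant derivative at eH of the G-invariant symmetric tensor field corresponding to A:
  (\<nabla>_X A)(Y,Z) = - A(alpha(X,Y),Z) - A(Y,alpha(X,Z)).\<close>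
definition nabla_tensor :: "('g::real_vector \<Rightarrow> 'g \<Rightarrow> 'g) \<Rightarrow> 'g set \<Rightarrow> 'g set \<Rightarrow> ('g \<Rightarrow> 'g \<Rightarrow> real) \<Rightarrow> ('g \<Rightarrow> 'g \<Rightarrow> real) \<Rightarrow> 'g \<Rightarrow> 'g \<Rightarrow> 'g \<Rightarrow> real" where
  "nabla_tensor br h m ip A x y z = - A (lc_prod br h m ip x y) z - A y (lc_prod br h m ip x z)"

text \<open>G-invariant Codazzi tensor field, described by its value A on m.\<close>
definition invariant_codazzi :: "('g::real_vector \<Rightarrow> 'g \<Rightarrow> 'g) \<Rightarrow> 'g set \<Rightarrow> 'g set \<Rightarrow> ('g \<Rightarrow> 'g \<Rightarrow> real) \<Rightarrow> ('g \<Rightarrow> 'g \<Rightarrow> real) \<Rightarrow> bool" where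
  "invariant_codazzi br h m ip A \<longleftrightarrow> bilinear A \<and> (\<forall>x\<in>m. \<forall>y\<in>m. A x y = A y x) \<and>
     ad_h_invariant br h m A \<and>
     (\<forall>x\<in>m. \<forall>y\<in>m. \<forall>z\<in>m. nabla_tensor br h m ip A x y z = nabla_tensor br h m ip A y x z)"

end

theory Submission
  imports Defs
begin

text \<open>
  Diagonalise \<open>A\<close> in an orthonormal eigenbasis \<open>e\<^sub>i\<close> of \<open>m\<close>, with eigenvalues \<open>\<lambda>\<^sub>i\<close>, and
  write \<open>T = \<nabla>A\<close>. In this basis \<open>T\<^sub>i\<^sub>j\<^sub>k = (\<lambda>\<^sub>j - \<lambda>\<^sub>k) \<langle>\<alpha>(e\<^sub>i,e\<^sub>j),e\<^sub>k\<rangle>\<close>; the Codazzi equation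
  together with the symmetry of \<open>A\<close> makes \<open>T\<^sub>i\<^sub>j\<^sub>k\<close> totally symmetric, so it vanishes unless
  \<open>\<lambda>\<^sub>i, \<lambda>\<^sub>j, \<lambda>\<^sub>k\<close> are pairwise distinct. Expanding \<open>R\<^sup>d\<close> in the basis and expressing each
  coefficient of \<open>\<alpha>\<close> through \<open>T\<close> gives, for \<open>\<lambda>\<^sub>i \<noteq> \<lambda>\<^sub>j\<close>,
  \<open>K\<^sup>d(e\<^sub>i,e\<^sub>j) = 2 \<Sum>\<^sub>k T\<^sub>i\<^sub>j\<^sub>k\<^sup>2 / ((\<lambda>\<^sub>i - \<lambda>\<^sub>k)(\<lambda>\<^sub>j - \<lambda>\<^sub>k))\<close>.
  Now take \<open>i\<close> with \<open>\<lambda>\<^sub>i\<close> minimal among the indices of nonzero components of \<open>T\<close>, and \<open>j\<close>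
  with \<open>\<lambda>\<^sub>j\<close> minimal (resp. maximal) among the \<open>j\<close> with some \<open>T\<^sub>i\<^sub>j\<^sub>k \<noteq> 0\<close>. Every \<open>k\<close> with
  \<open>T\<^sub>i\<^sub>j\<^sub>k \<noteq> 0\<close> then has \<open>\<lambda>\<^sub>k > \<lambda>\<^sub>i\<close>, and \<open>\<lambda>\<^sub>k > \<lambda>\<^sub>j\<close> (resp. \<open>\<lambda>\<^sub>k < \<lambda>\<^sub>j\<close>), so all
  nonzero summands are positive (resp. negative).
\<close>

lemma linear_coeff_zero_if_quadratic_nonpos:
  fixes b c :: real
  assumes "\<And>t. t * b + t\<^sup>2 * c \<le> 0"
  shows "b = 0"
proof -
  define s where "s = 1 / (\<bar>c\<bar> + 1)"
  have s_pos: "s > 0" unfolding s_def by simp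
  have "1 + s * c > 0"
  proof -
    have "s * \<bar>c\<bar> < 1" unfolding s_def by (simp add: field_simps)
    moreover have "s * (- \<bar>c\<bar>) \<le> s * c" using s_pos by (intro mult_left_mono) auto
    ultimately show ?thesis by simp
  qed
  moreover have "s * (b\<^sup>2 * (1 + s * c)) \<le> 0"
    using assms[of "s * b"] by (simp add: power2_eq_square algebra_simps)
  ultimately have "b\<^sup>2 \<le> 0" using s_pos by (simp add: mult_le_0_iff zero_less_mult_iff)
  then show "b = 0" by simp
qed

lemma bilinear_sum_scaleR_left:
  assumes "bilinear B"
  shows "B (\<Sum>e\<in>E. c e *\<^sub>R f e) y = (\<Sum>e\<in>E. c e * B (f e) y)"
  by (induction E rule: infinite_finite_induct)
    (simp_all add: bilinear_ladd[OF assms] bilinear_lmul[OF assms] bilinear_lzero[OF assms])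

lemma bilinear_sum_scaleR_right:
  assumes "bilinear B"
  shows "B x (\<Sum>e\<in>E. c e *\<^sub>R f e) = (\<Sum>e\<in>E. c e * B x (f e))"
  by (induction E rule: infinite_finite_induct)
    (simp_all add: bilinear_radd[OF assms] bilinear_rmul[OF assms] bilinear_rzero[OF assms])

lemma sum_square_div_pos:
  fixes t d :: "'a \<Rightarrow> real"
  assumes "finite E" "k0 \<in> E" "t k0 \<noteq> 0" "\<And>k. k \<in> E \<Longrightarrow> t k \<noteq> 0 \<Longrightarrow> d k > 0"
  shows "(\<Sum>k\<in>E. (t k)\<^sup>2 / d k) > 0"
proof (rule sum_pos2[OF assms(1,2)])
  show "(t k0)\<^sup>2 / d k0 > 0" using assms(2-4) by simp
  show "(t k)\<^sup>2 / d k \<ge> 0" if "k \<in> E" for k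
    using assms(4)[OF that] by (cases "t k = 0") auto
qed

lemma weighted_square_sum_pos:
  fixes t l :: "'a \<Rightarrow> real"
  assumes "finite E" "k0 \<in> E" "t k0 \<noteq> 0" "\<And>k. k \<in> E \<Longrightarrow> t k \<noteq> 0 \<Longrightarrow> li < l k \<and> lj < l k"
  shows "(\<Sum>k\<in>E. (t k)\<^sup>2 / ((li - l k) * (lj - l k))) > 0"
  using assms(4) by (intro sum_square_div_pos[where t = t, OF assms(1-3)]) (simp add: mult_neg_neg)

lemma weighted_square_sum_neg:
  fixes t l :: "'a \<Rightarrow> real"
  assumes "finite E" "k0 \<in> E" "t k0 \<noteq> 0" "\<And>k. k \<in> E \<Longrightarrow> t k \<noteq> 0 \<Longrightarrow> li < l k \<and> l k < lj"
  shows "(\<Sum>k\<in>E. (t k)\<^sup>2 / ((li - l k) * (lj - l k))) < 0"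
proof -
  have "(\<Sum>k\<in>E. (t k)\<^sup>2 / - ((li - l k) * (lj - l k))) > 0"
    using assms(4) by (intro sum_square_div_pos[where t = t, OF assms(1-3)]) (simp add: mult_neg_pos)
  then show ?thesis by (simp add: sum_negf)
qed

lemma weighted_square_sums_take_both_signs:
  fixes T :: "'a \<Rightarrow> 'a \<Rightarrow> 'a \<Rightarrow> real" and L :: "'a \<Rightarrow> real"
  assumes fin: "finite E"
    and T_swap12: "\<And>i j k. i \<in> E \<Longrightarrow> j \<in> E \<Longrightarrow> k \<in> E \<Longrightarrow> T j i k = T i j k"
    and T_swap23: "\<And>i j k. i \<in> E \<Longrightarrow> j \<in> E \<Longrightarrow> k \<in> E \<Longrightarrow> T i k j = T i j k"
    and T_dist: "\<And>i j k. i \<in> E \<Longrightarrow> j \<in> E \<Longrightarrow> k \<in> E \<Longrightarrow> T i j k \<noteq> 0 \<Longrightarrow> L i \<noteq> L j"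
    and T_nz: "\<exists>i\<in>E. \<exists>j\<in>E. \<exists>k\<in>E. T i j k \<noteq> 0"
  shows "\<exists>i\<in>E. \<exists>j\<in>E. L i \<noteq> L j \<and> (\<Sum>k\<in>E. (T i j k)\<^sup>2 / ((L i - L k) * (L j - L k))) > 0"
    and "\<exists>i\<in>E. \<exists>j\<in>E. L i \<noteq> L j \<and> (\<Sum>k\<in>E. (T i j k)\<^sup>2 / ((L i - L k) * (L j - L k))) < 0"
proof -
  define I where "I = {i \<in> E. \<exists>j\<in>E. \<exists>k\<in>E. T i j k \<noteq> 0}"
  have "finite I" "I \<noteq> {}" using fin T_nz unfolding I_def by auto
  then obtain i where "is_arg_min L (\<lambda>i. i \<in> I) i" using ex_is_arg_min_if_finite by blast
  then have i: "i \<in> I" "\<And>i'. i' \<in> I \<Longrightarrow> L i \<le> L i'" by (auto simp: is_arg_min_linorder)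
  have iE: "i \<in> E" using i(1) unfolding I_def by blast
  define J where "J = {j \<in> E. \<exists>k\<in>E. T i j k \<noteq> 0}"
  have "finite J" "J \<noteq> {}" using fin i(1) unfolding I_def J_def by auto
  then obtain j1 j2
    where "is_arg_min L (\<lambda>j. j \<in> J) j1" "is_arg_min (\<lambda>j. - L j) (\<lambda>j. j \<in> J) j2"
    using ex_is_arg_min_if_finite by metis
  then have j1: "j1 \<in> J" "\<And>j. j \<in> J \<Longrightarrow> L j1 \<le> L j"
    and j2: "j2 \<in> J" "\<And>j. j \<in> J \<Longrightarrow> L j \<le> L j2"
    by (auto simp: is_arg_min_linorder)
  have partner_bounds: "k \<in> J \<and> L i < L k \<and> L j \<noteq> L k"
    if "j \<in> E" "k \<in> E" "T i j k \<noteq> 0" for j k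
  proof -
    have "T k i j = T i j k" "T i k j = T i j k" "T j k i = T i j k"
      using T_swap12[of i k j] T_swap12[of i j k] T_swap23[of i j k] T_swap23[of j i k] iE that(1,2)
      by simp_all
    then have "T k i j \<noteq> 0" "T i k j \<noteq> 0" "T j k i \<noteq> 0" using that(3) by simp_all
    then have "k \<in> I" "k \<in> J" "L k \<noteq> L i" "L j \<noteq> L k"
      using that iE T_dist unfolding I_def J_def by blast+
    then show ?thesis using i(2)[of k] by auto
  qed
  have partner: "j \<in> E" "L i \<noteq> L j" "\<exists>k\<in>E. T i j k \<noteq> 0" if "j \<in> J" for j
    using that iE T_dist unfolding J_def by blast+
  obtain k1 where k1: "k1 \<in> E" "T i j1 k1 \<noteq> 0" using partner(3)[OF j1(1)] by blast
  have "L i < L k \<and> L j1 < L k" if "k \<in> E" "T i j1 k \<noteq> 0" for k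
    using partner_bounds[OF partner(1)[OF j1(1)] that] j1(2)[of k] by auto
  with fin k1 have "(\<Sum>k\<in>E. (T i j1 k)\<^sup>2 / ((L i - L k) * (L j1 - L k))) > 0"
    by (rule weighted_square_sum_pos[where t = "T i j1"])
  then show "\<exists>i\<in>E. \<exists>j\<in>E. L i \<noteq> L j \<and> (\<Sum>k\<in>E. (T i j k)\<^sup>2 / ((L i - L k) * (L j - L k))) > 0"
    using iE partner(1,2)[OF j1(1)] by blast
  obtain k2 where k2: "k2 \<in> E" "T i j2 k2 \<noteq> 0" using partner(3)[OF j2(1)] by blast
  have "L i < L k \<and> L k < L j2" if "k \<in> E" "T i j2 k \<noteq> 0" for k
    using partner_bounds[OF partner(1)[OF j2(1)] that] j2(2)[of k] by auto
  with fin k2 have "(\<Sum>k\<in>E. (T i j2 k)\<^sup>2 / ((L i - L k) * (L j2 - L k))) < 0"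
    by (rule weighted_square_sum_neg[where t = "T i j2"])
  then show "\<exists>i\<in>E. \<exists>j\<in>E. L i \<noteq> L j \<and> (\<Sum>k\<in>E. (T i j k)\<^sup>2 / ((L i - L k) * (L j - L k))) < 0"
    using iE partner(1,2)[OF j2(1)] by blast
qed

text \<open>The identity also holds when \<open>lk = li\<close> or \<open>lk = lj\<close>: then \<open>t = 0\<close>, and the right-hand
  side vanishes as well because \<open>x / 0 = 0\<close>.\<close>

lemma curvature_summand_eq:
  fixes li lj lk t a b c d e :: real
  assumes "li \<noteq> lj" and "t = (lj - lk) * a" "t = (li - lk) * b" "t = (lj - li) * c"
    and "(lj - lk) * d = 0" "(li - lk) * e = 0"
  shows "a * b - d * e - (a - b) * c = 2 * t\<^sup>2 / ((li - lk) * (lj - lk))"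
proof -
  have "d * e = 0" using assms(1,5,6) by auto
  moreover have "a * b - (a - b) * c = 2 * t\<^sup>2 / ((li - lk) * (lj - lk))"
  proof (cases "lk = li \<or> lk = lj")
    case True
    then show ?thesis using assms(1-4) by auto
  next
    case False
    have "(a * b - (a - b) * c) * ((li - lk) * (lj - lk))
        = ((lj - lk) * a) * ((li - lk) * b) + c * ((lj - lk) * ((li - lk) * b) - (li - lk) * ((lj - lk) * a))"
      by (simp add: algebra_simps)
    also have "\<dots> = t * t + t * ((lj - li) * c)"
      unfolding assms(2,3)[symmetric] by (simp add: algebra_simps)
    also have "\<dots> = 2 * t\<^sup>2"
      unfolding assms(4)[symmetric] by (simp add: power2_eq_square)
    finally show ?thesis using False by (simp add: eq_divide_eq)
  qed
  ultimately show ?thesis by auto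
qed

section \<open>Orthonormal eigenbases of a symmetric form\<close>

definition orthonormal_eigvecs ::
  "'g::real_vector set \<Rightarrow> ('g \<Rightarrow> 'g \<Rightarrow> real) \<Rightarrow> ('g \<Rightarrow> 'g \<Rightarrow> real) \<Rightarrow> 'g set \<Rightarrow> ('g \<Rightarrow> real) \<Rightarrow> bool"
  where "orthonormal_eigvecs m ip B E L \<longleftrightarrow> finite E \<and> E \<subseteq> m \<and>
    (\<forall>e\<in>E. \<forall>f\<in>E. ip e f = (if e = f then 1 else 0)) \<and> (\<forall>e\<in>E. \<forall>z\<in>m. B e z = L e * ip e z)"

definition orthonormal_eigenbasis ::
  "'g::real_vector set \<Rightarrow> ('g \<Rightarrow> 'g \<Rightarrow> real) \<Rightarrow> ('g \<Rightarrow> 'g \<Rightarrow> real) \<Rightarrow> 'g set \<Rightarrow> ('g \<Rightarrow> real) \<Rightarrow> bool"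
  where "orthonormal_eigenbasis m ip B E L \<longleftrightarrow>
    orthonormal_eigvecs m ip B E L \<and> (\<forall>z\<in>m. z = (\<Sum>e\<in>E. ip e z *\<^sub>R e))"

lemma orthonormal_eigenbasisD:
  assumes "orthonormal_eigenbasis m ip B E L"
  shows "finite E" "E \<subseteq> m" "e \<in> E \<Longrightarrow> f \<in> E \<Longrightarrow> ip e f = (if e = f then 1 else 0)"
    "e \<in> E \<Longrightarrow> z \<in> m \<Longrightarrow> B e z = L e * ip e z"
  using assms by (auto simp: orthonormal_eigenbasis_def orthonormal_eigvecs_def)

locale inner_subspace =
  fixes m :: "'g::euclidean_space set" and ip :: "'g \<Rightarrow> 'g \<Rightarrow> real"
  assumes subspace: "subspace m" and inner_on: "inner_on m ip"
begin

lemma ip_bilinear: "bilinear ip"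
  and ip_sym: "x \<in> m \<Longrightarrow> y \<in> m \<Longrightarrow> ip x y = ip y x"
  and ip_pos: "x \<in> m \<Longrightarrow> x \<noteq> 0 \<Longrightarrow> ip x x > 0"
  using inner_on unfolding inner_on_def by blast+

lemmas ip_simps = bilinear_ladd[OF ip_bilinear] bilinear_radd[OF ip_bilinear]
  bilinear_lmul[OF ip_bilinear] bilinear_rmul[OF ip_bilinear]
  bilinear_lsub[OF ip_bilinear] bilinear_rsub[OF ip_bilinear]
  bilinear_lzero[OF ip_bilinear] bilinear_rzero[OF ip_bilinear]
  bilinear_lneg[OF ip_bilinear] bilinear_rneg[OF ip_bilinear]

lemma eq_if_inner_eq:
  assumes "a \<in> m" "b \<in> m" "\<And>z. z \<in> m \<Longrightarrow> ip a z = ip b z"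
  shows "a = b"
proof -
  have "a - b \<in> m" using assms(1,2) subspace by (simp add: subspace_diff)
  moreover from this have "ip (a - b) (a - b) = 0"
    using assms(3) by (simp add: bilinear_lsub[OF ip_bilinear])
  ultimately show ?thesis using ip_pos by force
qed

lemma orthonormal_coord:
  assumes "finite E" "\<forall>e\<in>E. \<forall>f\<in>E. ip e f = (if e = f then 1 else 0)" "g \<in> E"
  shows "ip g (\<Sum>e\<in>E. c e *\<^sub>R e) = c g"
proof -
  have "ip g (\<Sum>e\<in>E. c e *\<^sub>R e) = (\<Sum>e\<in>E. c e * ip g e)"
    by (rule bilinear_sum_scaleR_right[OF ip_bilinear])
  also have "\<dots> = (\<Sum>e\<in>E. if e = g then c e else 0)"
    using assms(2,3) by (intro sum.cong) auto
  finally show ?thesis using assms(1,3) by simp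
qed

lemma orthonormal_independent:
  assumes "\<forall>e\<in>E. \<forall>f\<in>E. ip e f = (if e = f then 1 else 0)"
  shows "independent E"
proof
  assume "dependent E"
  then obtain t u v where t: "finite t" "t \<subseteq> E" "(\<Sum>v\<in>t. u v *\<^sub>R v) = 0"
    and v: "v \<in> t" "u v \<noteq> 0"
    unfolding dependent_explicit by blast
  have "u v = ip v (\<Sum>v\<in>t. u v *\<^sub>R v)"
    using assms t(1,2) v(1) by (intro orthonormal_coord[symmetric]) (auto simp: subset_iff)
  with t(3) v(2) show False by (simp add: ip_simps)
qed

definition orth_compl :: "'g set \<Rightarrow> 'g set" where
  "orth_compl E = {w \<in> m. \<forall>e\<in>E. ip e w = 0}"

lemma subspace_orth_compl: "subspace (orth_compl E)" and orth_compl_subset: "orth_compl E \<subseteq> m"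
  unfolding subspace_def orth_compl_def using subspace by (auto simp: subspace_def ip_simps)

lemma diff_projection_in_orth_compl:
  assumes "finite E" "E \<subseteq> m" "\<forall>e\<in>E. \<forall>f\<in>E. ip e f = (if e = f then 1 else 0)" "y \<in> m"
  shows "y - (\<Sum>e\<in>E. ip e y *\<^sub>R e) \<in> orth_compl E"
proof -
  have "(\<Sum>e\<in>E. ip e y *\<^sub>R e) \<in> m"
    using assms(2) by (intro subspace_sum[OF subspace] subspace_scale[OF subspace]) auto
  moreover have "ip e (\<Sum>e\<in>E. ip e y *\<^sub>R e) = ip e y" if "e \<in> E" for e
    using orthonormal_coord[OF assms(1,3) that] .
  ultimately show ?thesis
    unfolding orth_compl_def using assms(4) subspace by (auto simp: subspace_diff ip_simps)
qed

lemma rayleigh_quotient_max_exists: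
  assumes W: "subspace W" "W \<subseteq> m" "W \<noteq> {0}" and B: "bilinear B"
  obtains x where "x \<in> W" "ip x x = 1" "\<And>w. w \<in> W \<Longrightarrow> B w w \<le> B x x * ip w w"
proof -
  define q where "q x = B x x / ip x x" for x
  have q_scale: "q (c *\<^sub>R w) = q w" if "c \<noteq> 0" for c w
    unfolding q_def using that
    by (simp add: bilinear_lmul[OF B] bilinear_rmul[OF B] ip_simps)
  define K where "K = sphere 0 1 \<inter> W"
  have K_compact: "compact K"
    unfolding K_def using closed_subspace[OF W(1)] by (intro compact_Int_closed) auto
  have normalize_in_K: "(1 / norm w) *\<^sub>R w \<in> K" if "w \<in> W" "w \<noteq> 0" for w
    unfolding K_def using that subspace_scale[OF W(1)] by auto
  obtain w0 where "w0 \<in> W" "w0 \<noteq> 0" using W(1,3) subspace_0 by blast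
  then have "K \<noteq> {}" using normalize_in_K by blast
  have ip_pos_K: "ip x x > 0" if "x \<in> K" for x
  proof -
    have "x \<in> m" "x \<noteq> 0" using that W(2) unfolding K_def by auto
    then show ?thesis by (rule ip_pos)
  qed
  have quadratic_cont: "continuous_on K (\<lambda>x. C x x)" if "bilinear C" for C :: "'g \<Rightarrow> 'g \<Rightarrow> real"
    using bounded_bilinear.continuous_on[OF that[unfolded bilinear_conv_bounded_bilinear]
        continuous_on_id continuous_on_id] by simp
  have "continuous_on K q"
    unfolding q_def using ip_pos_K quadratic_cont[OF B] quadratic_cont[OF ip_bilinear]
    by (intro continuous_on_divide) force+
  then obtain x0 where x0: "x0 \<in> K" "\<And>y. y \<in> K \<Longrightarrow> q y \<le> q x0"
    using continuous_attains_sup[OF K_compact \<open>K \<noteq> {}\<close>] by blast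
  define x where "x = (1 / sqrt (ip x0 x0)) *\<^sub>R x0"
  have "x0 \<in> W" "ip x0 x0 > 0" using x0(1) ip_pos_K unfolding K_def by auto
  then have "x \<in> W" "ip x x = 1" "q x = q x0"
    unfolding x_def using subspace_scale[OF W(1)] q_scale by (auto simp: ip_simps)
  moreover have "B w w \<le> B x x * ip w w" if "w \<in> W" for w
  proof (cases "w = 0")
    case True then show ?thesis by (simp add: bilinear_lzero[OF B] ip_simps)
  next
    case False
    then have "q w \<le> q x" using x0(2)[OF normalize_in_K[OF that]] q_scale \<open>q x = q x0\<close> by simp
    moreover have "ip w w > 0" using False that W(2) ip_pos by auto
    ultimately show ?thesis using \<open>ip x x = 1\<close> unfolding q_def by (simp add: divide_le_eq)
  qed
  ultimately show ?thesis using that by blast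
qed

lemma rayleigh_quotient_max_is_eigen:
  assumes W: "subspace W" "W \<subseteq> m" and B: "bilinear B" "\<And>x y. x \<in> m \<Longrightarrow> y \<in> m \<Longrightarrow> B x y = B y x"
    and x: "x \<in> W" "ip x x = 1" "\<And>w. w \<in> W \<Longrightarrow> B w w \<le> B x x * ip w w"
    and v: "v \<in> W"
  shows "B x v = B x x * ip x v"
proof -
  have "2 * (B x v - B x x * ip x v) = 0"
  proof (rule linear_coeff_zero_if_quadratic_nonpos)
    fix t :: real
    have "x + t *\<^sub>R v \<in> W" using W(1) x(1) v by (simp add: subspace_add subspace_scale)
    then have "B (x + t *\<^sub>R v) (x + t *\<^sub>R v) \<le> B x x * ip (x + t *\<^sub>R v) (x + t *\<^sub>R v)"
      by (rule x(3))
    moreover have "B (x + t *\<^sub>R v) (x + t *\<^sub>R v) = B x x + t * B x v + t * B v x + t\<^sup>2 * B v v"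
      by (simp add: bilinear_ladd[OF B(1)] bilinear_radd[OF B(1)] bilinear_lmul[OF B(1)]
          bilinear_rmul[OF B(1)] power2_eq_square algebra_simps)
    moreover have "ip (x + t *\<^sub>R v) (x + t *\<^sub>R v) = ip x x + t * ip x v + t * ip v x + t\<^sup>2 * ip v v"
      by (simp add: ip_simps power2_eq_square algebra_simps)
    moreover have "B v x = B x v" "ip v x = ip x v"
      using W(2) x(1) v B(2)[of v x] ip_sym[of v x] by auto
    ultimately show "t * (2 * (B x v - B x x * ip x v)) + t\<^sup>2 * (B v v - B x x * ip v v) \<le> 0"
      using x(2) by (simp add: algebra_simps)
  qed
  then show ?thesis by simp
qed

lemma orthonormal_eigvecs_extend:
  assumes B: "bilinear B" "\<And>x y. x \<in> m \<Longrightarrow> y \<in> m \<Longrightarrow> B x y = B y x"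
    and E: "orthonormal_eigvecs m ip B E L" and z: "z \<in> m" "z \<noteq> (\<Sum>e\<in>E. ip e z *\<^sub>R e)"
  obtains x \<mu> where "x \<notin> E" "orthonormal_eigvecs m ip B (insert x E) (L(x := \<mu>))"
proof -
  have fin: "finite E" and Em: "E \<subseteq> m" and orth: "\<forall>e\<in>E. \<forall>f\<in>E. ip e f = (if e = f then 1 else 0)"
    and eig: "\<And>e y. e \<in> E \<Longrightarrow> y \<in> m \<Longrightarrow> B e y = L e * ip e y"
    using E by (auto simp: orthonormal_eigvecs_def)
  define P where "P y = (\<Sum>e\<in>E. ip e y *\<^sub>R e)" for y
  note P_compl = diff_projection_in_orth_compl[OF fin Em orth, folded P_def]
  note W = subspace_orth_compl orth_compl_subset
  have "z - P z \<noteq> 0" using z(2) unfolding P_def by simp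
  then have "orth_compl E \<noteq> {0}" using P_compl[OF z(1)] by blast
  then obtain x where x: "x \<in> orth_compl E" "ip x x = 1"
    "\<And>w. w \<in> orth_compl E \<Longrightarrow> B w w \<le> B x x * ip w w"
    using rayleigh_quotient_max_exists[OF W _ B(1)] by blast
  have xm: "x \<in> m" and x_orth: "\<And>e. e \<in> E \<Longrightarrow> ip e x = 0"
    using x(1) unfolding orth_compl_def by auto
  have "x \<notin> E" using x_orth x(2) by force
  have x_orth': "ip x e = 0" "B x e = 0" if "e \<in> E" for e
    using Em that ip_sym[OF xm] B(2)[OF xm] eig[OF that xm] x_orth[OF that] by auto
  have x_eig: "B x y = B x x * ip x y" if "y \<in> m" for y
  proof -
    have "B x (P y) = 0" "ip x (P y) = 0"
      unfolding P_def using x_orth'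
      by (simp_all add: bilinear_sum_scaleR_right[OF B(1)] bilinear_sum_scaleR_right[OF ip_bilinear])
    moreover have "B x (y - P y) = B x x * ip x (y - P y)"
      using rayleigh_quotient_max_is_eigen[OF W B x P_compl[OF that]] .
    ultimately show ?thesis by (simp add: bilinear_rsub[OF B(1)] ip_simps)
  qed
  have "orthonormal_eigvecs m ip B (insert x E) (L(x := B x x))"
    unfolding orthonormal_eigvecs_def
  proof (intro conjI ballI)
    fix e f assume "e \<in> insert x E" "f \<in> insert x E"
    then show "ip e f = (if e = f then 1 else 0)"
      using orth x(2) x_orth x_orth'(1) \<open>x \<notin> E\<close> by auto
  next
    fix e y assume "e \<in> insert x E" "y \<in> m"
    then show "B e y = (L(x := B x x)) e * ip e y"
      using eig x_eig \<open>x \<notin> E\<close> by auto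
  qed (use fin Em xm in auto)
  with \<open>x \<notin> E\<close> show ?thesis using that by blast
qed

lemma orthonormal_eigenbasis_exists:
  assumes B: "bilinear B" "\<And>x y. x \<in> m \<Longrightarrow> y \<in> m \<Longrightarrow> B x y = B y x"
  obtains E L where "orthonormal_eigenbasis m ip B E L"
proof -
  have "\<exists>E L. orthonormal_eigvecs m ip B E L \<and>
      (k \<le> card E \<or> (\<forall>z\<in>m. z = (\<Sum>e\<in>E. ip e z *\<^sub>R e)))" for k
    \<comment> \<open>Orthonormal families are independent, so this fails for \<open>k > DIM('g)\<close>
      unless the family spans \<open>m\<close>.\<close>
  proof (induction k)
    case 0
    have "orthonormal_eigvecs m ip B {} (\<lambda>_. 0)" by (simp add: orthonormal_eigvecs_def)
    then show ?case by blast
  next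
    case (Suc k)
    then obtain E L where E: "orthonormal_eigvecs m ip B E L"
      and k: "k \<le> card E \<or> (\<forall>z\<in>m. z = (\<Sum>e\<in>E. ip e z *\<^sub>R e))" by blast
    show ?case
    proof (cases "\<forall>z\<in>m. z = (\<Sum>e\<in>E. ip e z *\<^sub>R e)")
      case False
      then obtain z where "z \<in> m" "z \<noteq> (\<Sum>e\<in>E. ip e z *\<^sub>R e)" by blast
      then obtain x \<mu> where "x \<notin> E" "orthonormal_eigvecs m ip B (insert x E) (L(x := \<mu>))"
        using orthonormal_eigvecs_extend[OF B E] by blast
      moreover have "finite E" using E by (simp add: orthonormal_eigvecs_def)
      ultimately show ?thesis using k False by (metis Suc_le_mono card_insert_disjoint)
    qed (use E in blast)
  qed
  then obtain E L where E: "orthonormal_eigvecs m ip B E L"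
    and "Suc DIM('g) \<le> card E \<or> (\<forall>z\<in>m. z = (\<Sum>e\<in>E. ip e z *\<^sub>R e))" by blast
  moreover have "card E \<le> DIM('g)"
    using E independent_bound orthonormal_independent by (auto simp: orthonormal_eigvecs_def)
  ultimately show ?thesis using that unfolding orthonormal_eigenbasis_def by auto
qed

lemma eigenbasis_expansion:
  assumes "orthonormal_eigenbasis m ip B E L" "linear f" "z \<in> m"
  shows "f z = (\<Sum>e\<in>E. ip e z *\<^sub>R f e)"
proof -
  have "z = (\<Sum>e\<in>E. ip e z *\<^sub>R e)" using assms(1,3) by (simp add: orthonormal_eigenbasis_def)
  then have "f z = f (\<Sum>e\<in>E. ip e z *\<^sub>R e)" by simp
  then show ?thesis by (simp add: linear_sum[OF assms(2)] linear_scale[OF assms(2)])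
qed

lemma eigenbasis_parseval:
  assumes "orthonormal_eigenbasis m ip B E L" "u \<in> m" "v \<in> m"
  shows "ip u v = (\<Sum>e\<in>E. ip u e * ip v e)"
proof -
  have "E \<subseteq> m" using orthonormal_eigenbasisD(2)[OF assms(1)] .
  have "linear (ip u)" using ip_bilinear by (simp add: bilinear_def)
  from eigenbasis_expansion[OF assms(1) this assms(3)]
  show ?thesis using ip_sym[OF assms(3)] \<open>E \<subseteq> m\<close> by (auto simp: mult.commute intro!: sum.cong)
qed

end

section \<open>The Levi-Civita product of a reductive homogeneous space\<close>

locale reductive_metric = inner_subspace m ip
  for m :: "'g::euclidean_space set" and ip +
  fixes br :: "'g \<Rightarrow> 'g \<Rightarrow> 'g" and h :: "'g set"
  assumes lie_bracket: "lie_bracket br" and reductive: "reductive_decomp br h m"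
begin

abbreviation brm :: "'g \<Rightarrow> 'g \<Rightarrow> 'g" where "brm x y \<equiv> mpart h m (br x y)"
abbreviation \<alpha> :: "'g \<Rightarrow> 'g \<Rightarrow> 'g" where "\<alpha> \<equiv> lc_prod br h m ip"

lemma br_bilinear: "bilinear br" and br_antisym: "br x y = - br y x"
  using lie_bracket unfolding lie_bracket_def by blast+

lemma h_subspace: "subspace h" and h_inter_m: "h \<inter> m = {0}" and decompose: "\<exists>a\<in>h. \<exists>b\<in>m. v = a + b"
  using reductive unfolding reductive_decomp_def by blast+

lemma mpart_unique:
  assumes "b \<in> m" "v - b \<in> h"
  shows "mpart h m v = b"
  unfolding mpart_def
proof (rule the_equality)
  fix b' assume b': "b' \<in> m \<and> v - b' \<in> h"
  have "b' - b \<in> m" using subspace_diff[OF subspace] b' assms(1) by blast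
  moreover have "(v - b) - (v - b') \<in> h" using subspace_diff[OF h_subspace] b' assms(2) by blast
  then have "b' - b \<in> h" by simp
  ultimately have "b' - b = 0" using h_inter_m by blast
  then show "b' = b" by simp
qed (use assms in blast)

lemma mpart_in: "mpart h m v \<in> m"
proof -
  obtain a b where "a \<in> h" "b \<in> m" "v = a + b" using decompose by blast
  then show ?thesis using mpart_unique[of b v] by simp
qed

lemma mpart_compl: "v - mpart h m v \<in> h"
proof -
  obtain a b where "a \<in> h" "b \<in> m" "v = a + b" using decompose by blast
  then show ?thesis using mpart_unique[of b v] by simp
qed

lemma linear_mpart: "linear (mpart h m)"
proof (rule linearI)
  fix v w
  have "(v - mpart h m v) + (w - mpart h m w) \<in> h"
    using mpart_compl h_subspace by (simp add: subspace_add)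
  then have "v + w - (mpart h m v + mpart h m w) \<in> h" by (simp add: algebra_simps)
  then show "mpart h m (v + w) = mpart h m v + mpart h m w"
    using mpart_in subspace by (intro mpart_unique) (auto simp: subspace_add)
next
  fix c v
  have "c *\<^sub>R (v - mpart h m v) \<in> h" using mpart_compl h_subspace by (simp add: subspace_scale)
  then have "c *\<^sub>R v - c *\<^sub>R mpart h m v \<in> h" by (simp add: algebra_simps)
  then show "mpart h m (c *\<^sub>R v) = c *\<^sub>R mpart h m v"
    using mpart_in subspace by (intro mpart_unique) (auto simp: subspace_scale)
qed

lemma bilinear_brm: "bilinear brm"
  using br_bilinear linear_mpart unfolding bilinear_def by (auto intro: linear_compose[unfolded o_def])

lemma brm_antisym: "brm x y = - brm y x"
  using br_antisym linear_neg[OF linear_mpart] by metis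

lemmas brm_simps = bilinear_ladd[OF bilinear_brm] bilinear_radd[OF bilinear_brm]
  bilinear_lmul[OF bilinear_brm] bilinear_rmul[OF bilinear_brm]

definition koszul :: "'g \<Rightarrow> 'g \<Rightarrow> 'g \<Rightarrow> real" where
  "koszul x y z = ip (brm x y) z - ip x (brm y z) - ip (brm x z) y"

lemma linear_koszul: "linear (koszul x y)" "linear (\<lambda>y. koszul x y z)" "linear (\<lambda>x. koszul x y z)"
  unfolding koszul_def by (intro linearI; simp add: ip_simps brm_simps algebra_simps)+

lemma lc_prod_char: "\<alpha> x y \<in> m \<and> (\<forall>z\<in>m. 2 * ip (\<alpha> x y) z = koszul x y z)"
proof -
  obtain E L where E: "orthonormal_eigenbasis m ip ip E L"
    using orthonormal_eigenbasis_exists[OF ip_bilinear ip_sym] by blast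
  then have Em: "E \<subseteq> m" by (rule orthonormal_eigenbasisD)
  define a where "a = (\<Sum>e\<in>E. (koszul x y e / 2) *\<^sub>R e)"
  have "a \<in> m" unfolding a_def using Em by (intro subspace_sum[OF subspace] subspace_scale[OF subspace]) auto
  moreover have a_koszul: "2 * ip a z = koszul x y z" if "z \<in> m" for z
    using eigenbasis_expansion[OF E linear_koszul(1) that] ip_sym[OF that] Em
    unfolding a_def by (auto simp: bilinear_sum_scaleR_left[OF ip_bilinear] sum_distrib_left intro!: sum.cong)
  moreover have "b = a" if "b \<in> m" "\<forall>z\<in>m. 2 * ip b z = koszul x y z" for b
    using that(1) \<open>a \<in> m\<close> by (rule eq_if_inner_eq) (use that(2) a_koszul in force)
  ultimately have "\<exists>!a. a \<in> m \<and> (\<forall>z\<in>m. 2 * ip a z = koszul x y z)" by blast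
  then show ?thesis unfolding lc_prod_def koszul_def by (rule theI')
qed

lemma lc_prod_in: "\<alpha> x y \<in> m"
  and lc_prod_koszul: "z \<in> m \<Longrightarrow> 2 * ip (\<alpha> x y) z = koszul x y z"
  using lc_prod_char by blast+

lemma lc_prod_unique:
  assumes "a \<in> m" "\<And>z. z \<in> m \<Longrightarrow> 2 * ip a z = koszul x y z"
  shows "\<alpha> x y = a"
proof (rule eq_if_inner_eq[OF lc_prod_in assms(1)])
  fix z assume "z \<in> m"
  show "ip (\<alpha> x y) z = ip a z" using assms(2)[OF \<open>z \<in> m\<close>] lc_prod_koszul[OF \<open>z \<in> m\<close>, of x y] by simp
qed

lemma bilinear_lc_prod: "bilinear \<alpha>"
  unfolding bilinear_def
proof (intro allI conjI linearI)
  fix x y y' c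
  show "\<alpha> x (y + y') = \<alpha> x y + \<alpha> x y'" "\<alpha> x (c *\<^sub>R y) = c *\<^sub>R \<alpha> x y"
    by (rule lc_prod_unique;
        simp add: lc_prod_in subspace_add subspace_scale subspace ip_simps lc_prod_koszul
          linear_add[OF linear_koszul(2)] linear_scale[OF linear_koszul(2)])+
next
  fix x x' y c
  show "\<alpha> (x + x') y = \<alpha> x y + \<alpha> x' y" "\<alpha> (c *\<^sub>R x) y = c *\<^sub>R \<alpha> x y"
    by (rule lc_prod_unique;
        simp add: lc_prod_in subspace_add subspace_scale subspace ip_simps lc_prod_koszul
          linear_add[OF linear_koszul(3)] linear_scale[OF linear_koszul(3)])+
qed

lemma lc_prod_metric:
  assumes "y \<in> m" "z \<in> m"
  shows "ip (\<alpha> x y) z = - ip (\<alpha> x z) y"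
proof -
  have "koszul x y z + koszul x z y = 0"
    unfolding koszul_def using brm_antisym[of y z] ip_sym[OF assms(1) mpart_in]
      ip_sym[OF assms(2) mpart_in] by (simp add: ip_simps)
  then show ?thesis using lc_prod_koszul[OF assms(1), of x z] lc_prod_koszul[OF assms(2), of x y] by simp
qed

lemma lc_prod_torsion_free:
  assumes "x \<in> m" "y \<in> m"
  shows "\<alpha> x y - \<alpha> y x = brm x y"
proof (rule eq_if_inner_eq)
  show "\<alpha> x y - \<alpha> y x \<in> m" using lc_prod_in subspace by (simp add: subspace_diff)
  show "brm x y \<in> m" by (rule mpart_in)
  fix z assume "z \<in> m"
  then have "2 * ip (\<alpha> x y) z - 2 * ip (\<alpha> y x) z = 2 * ip (brm x y) z"
    unfolding lc_prod_koszul[OF \<open>z \<in> m\<close>] koszul_def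
    using brm_antisym[of y x] ip_sym[OF assms(1) mpart_in] ip_sym[OF assms(2) mpart_in]
    by (simp add: ip_simps)
  then show "ip (\<alpha> x y - \<alpha> y x) z = ip (brm x y) z" by (simp add: ip_simps)
qed

lemma diff_sec_curv_expansion:
  assumes E: "orthonormal_eigenbasis m ip B E L" and ij: "i \<in> m" "j \<in> m"
  shows "diff_sec_curv br h m ip i j = (\<Sum>k\<in>E. ip (\<alpha> i j) k * ip (\<alpha> j i) k
    - ip (\<alpha> j j) k * ip (\<alpha> i i) k - (ip (\<alpha> i j) k - ip (\<alpha> j i) k) * ip (\<alpha> k j) i)"
proof -
  have Em: "E \<subseteq> m" by (rule orthonormal_eigenbasisD[OF E])
  have "ip (\<alpha> i (\<alpha> j j)) i = - ip (\<alpha> i i) (\<alpha> j j)"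
    using lc_prod_metric[OF lc_prod_in ij(1)] .
  also have "ip (\<alpha> i i) (\<alpha> j j) = (\<Sum>k\<in>E. ip (\<alpha> i i) k * ip (\<alpha> j j) k)"
    by (rule eigenbasis_parseval[OF E lc_prod_in lc_prod_in])
  finally have t1: "ip (\<alpha> i (\<alpha> j j)) i = - (\<Sum>k\<in>E. ip (\<alpha> j j) k * ip (\<alpha> i i) k)"
    by (simp add: mult.commute)
  have "ip (\<alpha> j (\<alpha> i j)) i = - ip (\<alpha> j i) (\<alpha> i j)"
    using lc_prod_metric[OF lc_prod_in ij(1)] .
  also have "ip (\<alpha> j i) (\<alpha> i j) = (\<Sum>k\<in>E. ip (\<alpha> j i) k * ip (\<alpha> i j) k)"
    by (rule eigenbasis_parseval[OF E lc_prod_in lc_prod_in])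
  finally have t2: "ip (\<alpha> j (\<alpha> i j)) i = - (\<Sum>k\<in>E. ip (\<alpha> i j) k * ip (\<alpha> j i) k)"
    by (simp add: mult.commute)
  have "linear (\<lambda>x. \<alpha> x j)" "linear (\<lambda>v. ip v i)"
    using bilinear_lc_prod ip_bilinear by (simp_all add: bilinear_def)
  from linear_compose[OF this] have "linear (\<lambda>x. ip (\<alpha> x j) i)" by (simp add: o_def)
  from eigenbasis_expansion[OF E this mpart_in]
  have "ip (\<alpha> (brm i j) j) i = (\<Sum>k\<in>E. ip k (brm i j) * ip (\<alpha> k j) i)" by simp
  also have "\<dots> = (\<Sum>k\<in>E. (ip (\<alpha> i j) k - ip (\<alpha> j i) k) * ip (\<alpha> k j) i)"
  proof (rule sum.cong[OF refl])
    fix k assume "k \<in> E"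
    then have "ip k (brm i j) = ip (\<alpha> i j - \<alpha> j i) k"
      using Em ip_sym[OF _ mpart_in] lc_prod_torsion_free[OF ij] by auto
    then show "ip k (brm i j) * ip (\<alpha> k j) i = (ip (\<alpha> i j) k - ip (\<alpha> j i) k) * ip (\<alpha> k j) i"
      by (simp add: ip_simps)
  qed
  finally have t3: "ip (\<alpha> (brm i j) j) i = \<dots>" .
  have "diff_sec_curv br h m ip i j = ip (\<alpha> i (\<alpha> j j)) i - ip (\<alpha> j (\<alpha> i j)) i - ip (\<alpha> (brm i j) j) i"
    unfolding diff_sec_curv_def diff_curv_def Let_def by (simp add: ip_simps)
  then show ?thesis unfolding t1 t2 t3 by (simp add: sum_subtractf)
qed

end

section \<open>Invariant Codazzi tensors and the difference curvature\<close>

locale codazzi_tensor = reductive_metric m ip br h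
  for m :: "'g::euclidean_space set" and ip br h +
  fixes A :: "'g \<Rightarrow> 'g \<Rightarrow> real"
  assumes invariant_codazzi: "invariant_codazzi br h m ip A"
begin

abbreviation nablaA :: "'g \<Rightarrow> 'g \<Rightarrow> 'g \<Rightarrow> real" where "nablaA \<equiv> nabla_tensor br h m ip A"

lemma A_bilinear: "bilinear A"
  and A_sym: "x \<in> m \<Longrightarrow> y \<in> m \<Longrightarrow> A x y = A y x"
  and nabla_swap12: "x \<in> m \<Longrightarrow> y \<in> m \<Longrightarrow> z \<in> m \<Longrightarrow> nablaA y x z = nablaA x y z"
  using invariant_codazzi unfolding invariant_codazzi_def by metis+

lemma nabla_swap23:
  assumes "y \<in> m" "z \<in> m"
  shows "nablaA x z y = nablaA x y z"
  unfolding nabla_tensor_def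
  using A_sym[OF lc_prod_in assms(1)] A_sym[OF lc_prod_in assms(2)] by simp

lemma linear_nabla: "linear (nablaA x y)" "linear (\<lambda>y. nablaA x y z)" "linear (\<lambda>x. nablaA x y z)"
  unfolding nabla_tensor_def
  by (intro linearI; simp add: bilinear_ladd[OF A_bilinear] bilinear_radd[OF A_bilinear]
      bilinear_lmul[OF A_bilinear] bilinear_rmul[OF A_bilinear] bilinear_ladd[OF bilinear_lc_prod]
      bilinear_radd[OF bilinear_lc_prod] bilinear_lmul[OF bilinear_lc_prod]
      bilinear_rmul[OF bilinear_lc_prod] algebra_simps)+

lemma nabla_nonzero_on_eigenbasis:
  assumes E: "orthonormal_eigenbasis m ip B E L"
    and "\<exists>x\<in>m. \<exists>y\<in>m. \<exists>z\<in>m. nablaA x y z \<noteq> 0"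
  shows "\<exists>i\<in>E. \<exists>j\<in>E. \<exists>k\<in>E. nablaA i j k \<noteq> 0"
proof (rule ccontr)
  assume "\<not> ?thesis"
  then have "nablaA i j k = 0" if "i \<in> E" "j \<in> E" "k \<in> E" for i j k using that by blast
  then have "nablaA x j k = 0" if "x \<in> m" "j \<in> E" "k \<in> E" for x j k
    using eigenbasis_expansion[OF E linear_nabla(3) that(1)] that(2,3) by simp
  then have "nablaA x y k = 0" if "x \<in> m" "y \<in> m" "k \<in> E" for x y k
    using eigenbasis_expansion[OF E linear_nabla(2) that(2)] that(1,3) by simp
  then have "nablaA x y z = 0" if "x \<in> m" "y \<in> m" "z \<in> m" for x y z
    using eigenbasis_expansion[OF E linear_nabla(1) that(3)] that(1,2) by simp
  with assms(2) show False by blast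
qed


lemma nabla_eigenbasis:
  assumes E: "orthonormal_eigenbasis m ip A E L" and "j \<in> E" "k \<in> E"
  shows "nablaA x j k = (L j - L k) * ip (\<alpha> x j) k"
proof -
  have jk: "j \<in> m" "k \<in> m" using assms(2,3) orthonormal_eigenbasisD(2)[OF E] by auto
  have "A (\<alpha> x j) k = L k * ip (\<alpha> x j) k"
    using A_sym[OF lc_prod_in jk(2)] orthonormal_eigenbasisD(4)[OF E assms(3) lc_prod_in]
      ip_sym[OF jk(2) lc_prod_in] by simp
  moreover have "A j (\<alpha> x k) = - L j * ip (\<alpha> x j) k"
    using orthonormal_eigenbasisD(4)[OF E assms(2) lc_prod_in] ip_sym[OF jk(1) lc_prod_in]
      lc_prod_metric[OF jk(2,1)] by simp
  ultimately show ?thesis unfolding nabla_tensor_def by (simp add: algebra_simps)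
qed

lemma nabla_eigenbasis_distinct:
  assumes E: "orthonormal_eigenbasis m ip A E L" and ijk: "i \<in> E" "j \<in> E" "k \<in> E"
    and "nablaA i j k \<noteq> 0"
  shows "L i \<noteq> L j"
proof -
  have m: "i \<in> m" "j \<in> m" "k \<in> m" using ijk orthonormal_eigenbasisD(2)[OF E] by auto
  have "nablaA i j k = nablaA i k j" using nabla_swap23[OF m(2,3)] by simp
  also have "\<dots> = nablaA k i j" using nabla_swap12[OF m(3,1,2)] by simp
  also have "\<dots> = (L i - L j) * ip (\<alpha> k i) j" using nabla_eigenbasis[OF E ijk(1,2)] .
  finally show ?thesis using assms(5) by auto
qed

lemma diff_sec_curv_eigenbasis:
  assumes E: "orthonormal_eigenbasis m ip A E L" and ij: "i \<in> E" "j \<in> E" "L i \<noteq> L j"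
  shows "diff_sec_curv br h m ip i j = 2 * (\<Sum>k\<in>E. (nablaA i j k)\<^sup>2 / ((L i - L k) * (L j - L k)))"
proof -
  have Em: "E \<subseteq> m" by (rule orthonormal_eigenbasisD[OF E])
  have summand: "ip (\<alpha> i j) k * ip (\<alpha> j i) k - ip (\<alpha> j j) k * ip (\<alpha> i i) k
      - (ip (\<alpha> i j) k - ip (\<alpha> j i) k) * ip (\<alpha> k j) i
      = 2 * (nablaA i j k)\<^sup>2 / ((L i - L k) * (L j - L k))" if k: "k \<in> E" for k
  proof (rule curvature_summand_eq)
    have m: "i \<in> m" "j \<in> m" "k \<in> m" using ij k Em by auto
    note eigen = nabla_eigenbasis[OF E]
    show "nablaA i j k = (L j - L k) * ip (\<alpha> i j) k" using eigen ij k by simp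
    have ji: "nablaA i j k = nablaA j i k" using nabla_swap12[OF m(1,2,3)] by simp
    then show "nablaA i j k = (L i - L k) * ip (\<alpha> j i) k" using eigen ij k by simp
    have "nablaA i j k = nablaA k j i"
      using ji nabla_swap23[OF m(1,3), where x = j] nabla_swap12[OF m(2,3,1)] by simp
    then show "nablaA i j k = (L j - L i) * ip (\<alpha> k j) i" using eigen ij by simp
    have "nablaA x x k = nablaA k x x" if "x \<in> m" for x
      using nabla_swap23[OF that m(3)] nabla_swap12[OF that m(3) that] by simp
    then show "(L j - L k) * ip (\<alpha> j j) k = 0" "(L i - L k) * ip (\<alpha> i i) k = 0"
      using eigen[of j k j] eigen[of j j k] eigen[of i k i] eigen[of i i k] ij k m by simp_all
  qed (rule ij(3))
  have "diff_sec_curv br h m ip i j = (\<Sum>k\<in>E. ip (\<alpha> i j) k * ip (\<alpha> j i) k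
      - ip (\<alpha> j j) k * ip (\<alpha> i i) k - (ip (\<alpha> i j) k - ip (\<alpha> j i) k) * ip (\<alpha> k j) i)"
    using diff_sec_curv_expansion[OF E] ij(1,2) Em by blast
  also have "\<dots> = (\<Sum>k\<in>E. 2 * ((nablaA i j k)\<^sup>2 / ((L i - L k) * (L j - L k))))"
    by (rule sum.cong[OF refl]) (simp add: summand)
  finally show ?thesis by (simp add: sum_distrib_left)
qed

theorem diff_sec_curv_takes_both_signs:
  assumes "\<exists>x\<in>m. \<exists>y\<in>m. \<exists>z\<in>m. nablaA x y z \<noteq> 0"
  shows "(\<exists>x y. orthonormal_pair m ip x y \<and> diff_sec_curv br h m ip x y > 0) \<and>
         (\<exists>x y. orthonormal_pair m ip x y \<and> diff_sec_curv br h m ip x y < 0)"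
proof -
  obtain E L where E: "orthonormal_eigenbasis m ip A E L"
    using orthonormal_eigenbasis_exists[OF A_bilinear A_sym] by blast
  have Em: "e \<in> E \<Longrightarrow> e \<in> m" for e using orthonormal_eigenbasisD(2)[OF E] by blast
  have swap12: "nablaA j i k = nablaA i j k" if "i \<in> E" "j \<in> E" "k \<in> E" for i j k
    using nabla_swap12[OF Em[OF that(1)] Em[OF that(2)] Em[OF that(3)]] .
  have swap23: "nablaA i k j = nablaA i j k" if "i \<in> E" "j \<in> E" "k \<in> E" for i j k
    using nabla_swap23[OF Em[OF that(2)] Em[OF that(3)]] .
  have distinct: "L i \<noteq> L j" if "i \<in> E" "j \<in> E" "k \<in> E" "nablaA i j k \<noteq> 0" for i j k
    using nabla_eigenbasis_distinct[OF E that] .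
  have fin: "finite E" by (rule orthonormal_eigenbasisD(1)[OF E])
  note nonzero = nabla_nonzero_on_eigenbasis[OF E assms]
  have signs: "\<exists>i\<in>E. \<exists>j\<in>E. L i \<noteq> L j \<and> (\<Sum>k\<in>E. (nablaA i j k)\<^sup>2 / ((L i - L k) * (L j - L k))) > 0"
    "\<exists>i\<in>E. \<exists>j\<in>E. L i \<noteq> L j \<and> (\<Sum>k\<in>E. (nablaA i j k)\<^sup>2 / ((L i - L k) * (L j - L k))) < 0"
    by (rule weighted_square_sums_take_both_signs[OF fin]; fact swap12 swap23 distinct nonzero)+
  have pair: "orthonormal_pair m ip i j" if "i \<in> E" "j \<in> E" "L i \<noteq> L j" for i j
    using that Em orthonormal_eigenbasisD(3)[OF E] unfolding orthonormal_pair_def by auto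
  obtain i j where ij: "i \<in> E" "j \<in> E" "L i \<noteq> L j"
    and "(\<Sum>k\<in>E. (nablaA i j k)\<^sup>2 / ((L i - L k) * (L j - L k))) > 0"
    using signs(1) by auto
  then have "diff_sec_curv br h m ip i j > 0" using diff_sec_curv_eigenbasis[OF E ij] by simp
  moreover obtain i' j' where ij': "i' \<in> E" "j' \<in> E" "L i' \<noteq> L j'"
    and "(\<Sum>k\<in>E. (nablaA i' j' k)\<^sup>2 / ((L i' - L k) * (L j' - L k))) < 0"
    using signs(2) by auto
  then have "diff_sec_curv br h m ip i' j' < 0" using diff_sec_curv_eigenbasis[OF E ij'] by simp
  ultimately show ?thesis using pair[OF ij] pair[OF ij'] by blast
qed

end

theorem proposition3p1:
  fixes br :: "'g::euclidean_space \<Rightarrow> 'g \<Rightarrow> 'g"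
    and h m :: "'g set"
    and ip A :: "'g \<Rightarrow> 'g \<Rightarrow> real"
  assumes "lie_bracket br"
    and "reductive_decomp br h m"
    and "inner_on m ip"
    and "ad_h_invariant br h m ip"
    and "invariant_codazzi br h m ip A"
    and "\<exists>x\<in>m. \<exists>y\<in>m. \<exists>z\<in>m. nabla_tensor br h m ip A x y z \<noteq> 0"
  shows "(\<exists>x y. orthonormal_pair m ip x y \<and> diff_sec_curv br h m ip x y > 0) \<and>
         (\<exists>x y. orthonormal_pair m ip x y \<and> diff_sec_curv br h m ip x y < 0)"
proof -
  \<comment> \<open>The computation at \<open>eH\<close> only uses the algebraic formula for \<open>\<alpha>\<close>.\<close>
  have "subspace m" using assms(2) by (simp add: reductive_decomp_def)
  interpret codazzi_tensor m ip br h A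
    by unfold_locales (fact \<open>subspace m\<close> assms(1-3,5))+
  show ?thesis by (rule diff_sec_curv_takes_both_signs[OF assms(6)])
qed

end
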